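(* The DRN $\mathcal X^0$ with transition cocycle $P^0(0,\omega)=I_k$, $P^0(n,\omega)=A_{n-1}\cdots A_0$ ($n\ge1$, $\omega=(A_z)_{z\in\mathbb Z}$) is synchronized, and its synchronization index $J:\Omega\to\mathbb K$ is given by $e_{J(\omega)}=\lim_{n\to\infty}A_{-1}\cdots A_{-n}e_1$ for $\mu$-a.e. $\omega=(A_z)_{z\in\mathbb Z}$. An $\mathcal F$-measurable function $N:\Omega\to\mathbb N$ is a forward (respectively pull-back) synchronization time of $\mathcal X^0$ if and only if $N\ge N_0^+$ (respectively $N\ge N_0^-$) $\mu$-a.e. on $\Omega$. In particular, $\mathcal X^0$ is not uniformly synchronized.
   Context: Fix $k\ge2$, $\mathbb K=\{1,\dots,k\}$, $S=\{s_1,\dots,s_k\}$, $e_1,\dots,e_k$ the canonical basis of $\mathbb R^k$. Let $\mathcal M$ be the set of $k\times k$ matrices with entries in $\{0,1\}$ having exactly one entry $1$ in each column (so $\#\mathcal M=k^k$), and $\nu$ the uniform probability on $\mathcal M$. Let $(\Omega,\mathcal F,\mu)=\bigotimes_{z\in\mathbb Z}(\mathcal M,2^{\mathcal M},\nu)$ and $\theta$ the left shift $\theta((A_z)_{z\in\mathbb Z})=(A_{z+1})_{z\in\mathbb Z}$; this is an invertible ergodic measure-preserving system. $\mathcal X^0$ is the deterministic random network (a Markov process on $S\times\Omega$ moving from fibre $\omega$ to $\theta\omega$) whose transition probabilities $\mathbb P\{X_n=(s_i,\theta^n\omega)\mid X_0=(s_j,\omega)\}$ are the entries $P^0(n,\omega)_{i,j}$.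 $\mathcal X^0$ is synchronized if there is a measurable $N:\Omega\to\mathbb N$ such that, $\mu$-a.e., all columns of $P^0(n,\omega)$ coincide for every $n\ge N(\omega)$; uniformly synchronized if such $N$ can be chosen $\mu$-a.e. constant. A synchronization index is a measurable $J:\Omega\to\mathbb K$ with $P^0(n,\omega)e_{J(\omega)}=e_{J(\theta^n\omega)}$ for all $n\in\mathbb N_0$, $\mu$-a.e. $\omega$. A forward synchronization time is a measurable $N^+:\Omega\to\mathbb N$ with $P^0(n,\omega)e_j=e_{J(\theta^n\omega)}$ for all $j$ and all $n\ge N^+(\omega)$, $\mu$-a.e.; a pull-back synchronization time is a measurable $N^-:\Omega\to\mathbb N$ with $P^0(n,\theta^{-n}\omega)e_j=e_{J(\omega)}$ for all $j$ and $n\ge N^-(\omega)$, $\mu$-a.e. Define $N_0^+(\omega)=\min\{n\in\mathbb N:\operatorname{rank}P^0(n,\omega)=1\}$ if $\lim_{n}\operatorname{rank}P^0(n,\omega)=1$ and $N_0^+(\omega)=1$ otherwise; and $N_0^-(\omega)=\min\{n\in\mathbb N:\operatorname{rank}P^0(n,\theta^{-n}\omega)=1\}$ if $\lim_n\operatorname{rank}P^0(n,\theta^{-n}\omega)=1$ and $N_0^-(\omega)=1$ otherwise. *)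

theory Defs
  imports "HOL-Probability.Probability"
begin

text \<open>Index set K is the finite type 'k (with k = CARD('k) and its order);
  e_j is axis j 1.  The index "1" of K is the least element of 'k.\<close>

definition e1_idx :: "'k::{finite,wellorder}" where
  "e1_idx = (LEAST i. True)"

definition Mset :: "(real^'k^'k) set" where
  "Mset = {A. (\<forall>i j. A$i$j = 0 \<or> A$i$j = 1) \<and> (\<forall>j. \<exists>!i. A$i$j = 1)}"

definition Mu :: "(int \<Rightarrow> real^'k::finite^'k) measure" where
  "Mu = (\<Pi>\<^sub>M z\<in>(UNIV::int set). uniform_count_measure Mset)"

definition theta :: "(int \<Rightarrow> 'a) \<Rightarrow> (int \<Rightarrow> 'a)" where
  "theta \<omega> = (\<lambda>z. \<omega> (z + 1))"

definition theta_inv :: "(int \<Rightarrow> 'a) \<Rightarrow> (int \<Rightarrow> 'a)" where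
  "theta_inv \<omega> = (\<lambda>z. \<omega> (z - 1))"

fun P0 :: "nat \<Rightarrow> (int \<Rightarrow> real^'k::finite^'k) \<Rightarrow> real^'k^'k" where
  "P0 0 \<omega> = mat 1"
| "P0 (Suc n) \<omega> = \<omega> (int n) ** P0 n \<omega>"

definition cols_coincide :: "real^'k::finite^'k \<Rightarrow> bool" where
  "cols_coincide A \<longleftrightarrow> (\<forall>i j. column i A = column j A)"

definition synchronized :: "'k::finite itself \<Rightarrow> bool" where
  "synchronized (_::'k itself) \<longleftrightarrow> (\<exists>N :: (int \<Rightarrow> real^'k::finite^'k) \<Rightarrow> nat.
      N \<in> Mu \<rightarrow>\<^sub>M count_space UNIV \<and> (\<forall>\<omega>\<in>space Mu. 1 \<le> N \<omega>) \<and>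
      (AE \<omega> in Mu. \<forall>n\<ge>N \<omega>. cols_coincide (P0 n \<omega>)))"

definition unif_synchronized :: "'k::finite itself \<Rightarrow> bool" where
  "unif_synchronized (_::'k itself) \<longleftrightarrow> (\<exists>N :: (int \<Rightarrow> real^'k::finite^'k) \<Rightarrow> nat.
      N \<in> Mu \<rightarrow>\<^sub>M count_space UNIV \<and> (\<forall>\<omega>\<in>space Mu. 1 \<le> N \<omega>) \<and>
      (\<exists>c. AE \<omega> in Mu. N \<omega> = c) \<and>
      (AE \<omega> in Mu. \<forall>n\<ge>N \<omega>. cols_coincide (P0 n \<omega>)))"

definition sync_index :: "((int \<Rightarrow> real^'k::finite^'k) \<Rightarrow> 'k) \<Rightarrow> bool" where
  "sync_index J \<longleftrightarrow> J \<in> Mu \<rightarrow>\<^sub>M count_space UNIV \<and>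
      (AE \<omega> in Mu. \<forall>n. P0 n \<omega> *v axis (J \<omega>) 1 = axis (J ((theta ^^ n) \<omega>)) 1)"

definition fwd_sync_time ::
    "((int \<Rightarrow> real^'k::finite^'k) \<Rightarrow> 'k) \<Rightarrow> ((int \<Rightarrow> real^'k^'k) \<Rightarrow> nat) \<Rightarrow> bool" where
  "fwd_sync_time J N \<longleftrightarrow> N \<in> Mu \<rightarrow>\<^sub>M count_space UNIV \<and> (\<forall>\<omega>\<in>space Mu. 1 \<le> N \<omega>) \<and>
      (AE \<omega> in Mu. \<forall>j. \<forall>n\<ge>N \<omega>. P0 n \<omega> *v axis j 1 = axis (J ((theta ^^ n) \<omega>)) 1)"

definition pb_sync_time ::
    "((int \<Rightarrow> real^'k::finite^'k) \<Rightarrow> 'k) \<Rightarrow> ((int \<Rightarrow> real^'k^'k) \<Rightarrow> nat) \<Rightarrow> bool" where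
  "pb_sync_time J N \<longleftrightarrow> N \<in> Mu \<rightarrow>\<^sub>M count_space UNIV \<and> (\<forall>\<omega>\<in>space Mu. 1 \<le> N \<omega>) \<and>
      (AE \<omega> in Mu. \<forall>j. \<forall>n\<ge>N \<omega>. P0 n ((theta_inv ^^ n) \<omega>) *v axis j 1 = axis (J \<omega>) 1)"

definition N0_plus :: "(int \<Rightarrow> real^'k::finite^'k) \<Rightarrow> nat" where
  "N0_plus \<omega> = (if (\<lambda>n. rank (P0 n \<omega>)) \<longlonglongrightarrow> 1
      then (LEAST n. 1 \<le> n \<and> rank (P0 n \<omega>) = 1) else 1)"

definition N0_minus :: "(int \<Rightarrow> real^'k::finite^'k) \<Rightarrow> nat" where
  "N0_minus \<omega> = (if (\<lambda>n. rank (P0 n ((theta_inv ^^ n) \<omega>))) \<longlonglongrightarrow> 1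
      then (LEAST n. 1 \<le> n \<and> rank (P0 n ((theta_inv ^^ n) \<omega>)) = 1) else 1)"

end

theory Submission
  imports Defs
begin

text \<open>A matrix of \<^const>\<open>Mset\<close> is the matrix of a self-map of the index set, so
  \<^term>\<open>P0 n \<omega>\<close> sends \<open>e\<^sub>j\<close> to \<open>e\<^sub>F\<^sub>(\<^sub>j\<^sub>)\<close>, where \<open>F\<close> composes the maps
  of \<open>\<omega> 0, \<dots>, \<omega> (n - 1)\<close>. Constant maps have positive probability, so almost surely
  one occurs at some time \<open>z \<ge> 0\<close> and at some time \<open>z < 0\<close>. After the first one
  ahead, every forward composite is constant. The backward composite of
  \<open>\<omega> (-n), \<dots>, \<omega> (-1)\<close> becomes constant once it contains the first constant map
  behind time 0, and from then on its value does not depend on \<open>n\<close>: this value is \<open>J\<close>.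
  As a constant composite stays constant under further composition, the synchronization
  times are exactly the times beyond \<^const>\<open>N0_plus\<close> resp. \<^const>\<open>N0_minus\<close>.
  Uniform synchronization fails because the identity matrix occurs at all times
  \<open>0, \<dots>, c - 1\<close> with positive probability.\<close>

definition column_map :: "real^'k::finite^'k \<Rightarrow> 'k \<Rightarrow> 'k" where
  "column_map A j = (THE i. A$i$j = 1)"

definition matrix_of_map :: "('k::finite \<Rightarrow> 'k) \<Rightarrow> real^'k^'k" where
  "matrix_of_map g = (\<chi> i j. if i = g j then 1 else 0)"

lemma matrix_of_map_in_Mset: "matrix_of_map g \<in> Mset"
  unfolding Mset_def matrix_of_map_def by auto

lemma column_map_matrix_of_map [simp]: "column_map (matrix_of_map g) = g"
  unfolding column_map_def matrix_of_map_def by (intro ext the_equality) (auto split: if_splits)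

lemma Mset_nth:
  assumes "A \<in> Mset"
  shows "A$i$j = (if i = column_map A j then 1 else 0)"
proof -
  from assms have unique: "\<exists>!i. A$i$j = 1" and binary: "A$i$j = 0 \<or> A$i$j = 1"
    unfolding Mset_def by auto
  have "A$(column_map A j)$j = 1"
    unfolding column_map_def using theI'[OF unique] .
  with unique binary show ?thesis
    by metis
qed

lemma Mset_eq_range_matrix_of_map: "Mset = range matrix_of_map"
proof -
  have "A = matrix_of_map (column_map A)" if "A \<in> Mset" for A :: "real^'k^'k"
    using that by (simp add: vec_eq_iff matrix_of_map_def Mset_nth)
  then show ?thesis
    using matrix_of_map_in_Mset by blast
qed

lemma finite_Mset: "finite (Mset :: (real^'k::finite^'k) set)"
  unfolding Mset_eq_range_matrix_of_map by simp

lemma matrix_of_map_id: "matrix_of_map id = mat 1"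
  by (simp add: mat_def matrix_of_map_def vec_eq_iff)

lemma Mset_mult_axis: "A \<in> Mset \<Longrightarrow> A *v axis j 1 = axis (column_map A j) 1"
  unfolding matrix_vector_mult_basis by (simp add: column_def vec_eq_iff axis_def Mset_nth)

lemma rank_eq_1_iff_basis_columns:
  fixes P :: "real^'n::finite^'m::finite"
  assumes "\<And>j. P *v axis j 1 = axis (f j) 1"
  shows "rank P = 1 \<longleftrightarrow> (\<forall>i j. f i = f j)"
proof -
  have columns: "columns P = (\<lambda>j. axis (f j) 1) ` UNIV"
    by (auto simp: columns_def matrix_vector_mult_basis[symmetric] assms)
  show ?thesis
  proof
    assume rank: "rank P = 1"
    show "\<forall>i j. f i = f j"
    proof (rule ccontr)
      assume "\<not> (\<forall>i j. f i = f j)"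
      then obtain a b where ab: "f a \<noteq> f b"
        by blast
      have "independent {axis (f a) (1::real), axis (f b) 1}"
        by (rule independent_mono[OF independent_Basis]) auto
      moreover have "{axis (f a) (1::real), axis (f b) 1} \<subseteq> columns P"
        using columns by auto
      ultimately have "card {axis (f a) (1::real), axis (f b) 1} \<le> dim (columns P)"
        by (simp add: independent_card_le_dim)
      with ab rank show False
        by (simp add: column_rank_def axis_eq_axis)
    qed
  next
    assume "\<forall>i j. f i = f j"
    then obtain c where "f = (\<lambda>_. c)"
      by blast
    then have "columns P = {axis c 1}"
      by (simp add: columns)
    then show "rank P = 1"
      by (simp add: column_rank_def)
  qed
qed

lemma cols_coincide_iff_basis_columns:
  "(\<And>j. P *v axis j 1 = axis (f j) 1) \<Longrightarrow> cols_coincide P \<longleftrightarrow> (\<forall>i j. f i = f j)"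
  unfolding cols_coincide_def by (simp add: matrix_vector_mult_basis[symmetric] axis_eq_axis)

text \<open>\<^term>\<open>flow \<omega> a n\<close> is the self-map of the product \<open>\<omega> (a + n - 1) \<cdots> \<omega> a\<close>.\<close>

fun flow :: "(int \<Rightarrow> real^'k::finite^'k) \<Rightarrow> int \<Rightarrow> nat \<Rightarrow> 'k \<Rightarrow> 'k" where
  "flow \<omega> a 0 = id"
| "flow \<omega> a (Suc n) = column_map (\<omega> (a + int n)) \<circ> flow \<omega> a n"

lemma flow_add: "flow \<omega> a (m + n) = flow \<omega> (a + int m) n \<circ> flow \<omega> a m"
  by (induction n) (auto simp: ac_simps)

lemma flow_shift: "flow (\<lambda>z. \<omega> (z + s)) a n = flow \<omega> (a + s) n"
  by (induction n) (auto simp: ac_simps)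

lemma theta_pow: "(theta ^^ n) \<omega> = (\<lambda>z. \<omega> (z + int n))"
  by (induction n arbitrary: \<omega>) (auto simp: theta_def ac_simps)

lemma theta_inv_pow: "(theta_inv ^^ n) \<omega> = (\<lambda>z. \<omega> (z - int n))"
  by (induction n arbitrary: \<omega>) (auto simp: theta_inv_def algebra_simps)

lemma P0_mult_axis: "range \<omega> \<subseteq> Mset \<Longrightarrow> P0 n \<omega> *v axis j 1 = axis (flow \<omega> 0 n j) 1"
  by (induction n arbitrary: j)
    (auto simp: matrix_vector_mul_assoc[symmetric] Mset_mult_axis image_subset_iff)

lemma P0_pullback_mult_axis:
  assumes "range \<omega> \<subseteq> Mset"
  shows "P0 n ((theta_inv ^^ n) \<omega>) *v axis j 1 = axis (flow \<omega> (- int n) n j) 1"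
proof -
  have "range (\<lambda>z. \<omega> (z + - int n)) \<subseteq> Mset"
    using assms by auto
  from P0_mult_axis[OF this] show ?thesis
    using flow_shift[of \<omega> "- int n" 0 n] by (simp add: theta_inv_pow)
qed

definition const_matrices :: "(real^'k::finite^'k) set" where
  "const_matrices = {A \<in> Mset. \<forall>i j. column_map A i = column_map A j}"

lemma const_matrices_subset_Mset: "const_matrices \<subseteq> Mset"
  by (auto simp: const_matrices_def)

lemma matrix_of_map_const_in_const_matrices: "matrix_of_map (\<lambda>_. c) \<in> const_matrices"
  by (simp add: const_matrices_def matrix_of_map_in_Mset)

lemma flow_constant_after_const_matrix:
  assumes "\<omega> (a + int m) \<in> const_matrices" "m < n"
  shows "flow \<omega> a n i = flow \<omega> a n j"
proof -
  obtain d where n: "n = Suc m + d"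
    using less_imp_Suc_add[OF assms(2)] by auto
  have "column_map (\<omega> (a + int m)) (flow \<omega> a m i) = column_map (\<omega> (a + int m)) (flow \<omega> a m j)"
    using assms(1) unfolding const_matrices_def by blast
  then show ?thesis
    unfolding n flow_add by simp
qed

lemma flow_constant_mono:
  assumes "\<forall>i j. flow \<omega> a m i = flow \<omega> a m j" "m \<le> n"
  shows "flow \<omega> a n i = flow \<omega> a n j"
proof -
  obtain d where "n = m + d"
    using assms(2) le_Suc_ex by blast
  with assms(1) show ?thesis
    by (metis comp_apply flow_add)
qed

lemma pullback_flow_constant_mono:
  assumes "\<forall>i j. flow \<omega> (- int m) m i = flow \<omega> (- int m) m j" "m \<le> n"
  shows "flow \<omega> (- int n) n = (\<lambda>_. flow \<omega> (- int m) m i)"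
proof -
  obtain d where n: "n = d + m"
    using assms(2) by (metis add.commute le_Suc_ex)
  have "flow \<omega> (- int n) n = flow \<omega> (- int m) m \<circ> flow \<omega> (- int n) d"
    unfolding n flow_add by (simp add: n)
  with assms(1) show ?thesis
    by auto
qed

lemma flow_constant_iff:
  "(\<forall>j. \<forall>n\<ge>m. flow \<omega> a n j = flow \<omega> a n k) \<longleftrightarrow> (\<forall>i j. flow \<omega> a m i = flow \<omega> a m j)"
proof
  assume "\<forall>j. \<forall>n\<ge>m. flow \<omega> a n j = flow \<omega> a n k"
  then have "flow \<omega> a m j = flow \<omega> a m k" for j
    by blast
  then show "\<forall>i j. flow \<omega> a m i = flow \<omega> a m j"
    by metis
qed (use flow_constant_mono in blast)

abbreviation uniform_Mset :: "(real^'k::finite^'k) measure" where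
  "uniform_Mset \<equiv> uniform_count_measure Mset"

lemma prob_space_uniform_Mset: "prob_space uniform_Mset"
  using finite_Mset matrix_of_map_in_Mset by (auto intro!: prob_space_uniform_count_measure)

lemma space_Mu: "space Mu = {\<omega>. range \<omega> \<subseteq> Mset}"
  unfolding Mu_def by (auto simp: space_PiM PiE_UNIV_domain space_uniform_count_measure)

lemma cylinder_eq_prod_emb:
  "{\<omega>\<in>space Mu. \<forall>z\<in>S. \<omega> z \<in> A z} = prod_emb UNIV (\<lambda>_. uniform_Mset) S (Pi\<^sub>E S A)"
  unfolding Mu_def prod_emb_def by (auto simp: restrict_PiE_iff space_PiM)

lemma cylinder_in_sets_Mu:
  "finite S \<Longrightarrow> (\<And>z. z \<in> S \<Longrightarrow> A z \<subseteq> Mset) \<Longrightarrow> {\<omega>\<in>space Mu. \<forall>z\<in>S. \<omega> z \<in> A z} \<in> sets Mu"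
  unfolding cylinder_eq_prod_emb unfolding Mu_def
  by (rule sets_PiM_I) (auto simp: sets_uniform_count_measure)

lemma emeasure_Mu_cylinder:
  fixes A :: "int \<Rightarrow> (real^'k::finite^'k) set"
  assumes "finite S" "\<And>z. z \<in> S \<Longrightarrow> A z \<subseteq> Mset"
  shows "emeasure Mu {\<omega>\<in>space Mu. \<forall>z\<in>S. \<omega> z \<in> A z}
    = ennreal (\<Prod>z\<in>S. card (A z) / card (Mset :: (real^'k^'k) set))"
proof -
  have "emeasure Mu {\<omega>\<in>space Mu. \<forall>z\<in>S. \<omega> z \<in> A z} = (\<Prod>z\<in>S. emeasure uniform_Mset (A z))"
    unfolding cylinder_eq_prod_emb unfolding Mu_def
    using assms by (intro emeasure_PiM_emb) (auto simp: prob_space_uniform_Mset sets_uniform_count_measure)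
  also have "\<dots> = (\<Prod>z\<in>S. ennreal (card (A z) / card (Mset :: (real^'k^'k) set)))"
  proof (rule prod.cong)
    fix z assume "z \<in> S"
    with assms(2) show "emeasure uniform_Mset (A z) = ennreal (card (A z) / card (Mset :: (real^'k^'k) set))"
      by (simp add: finite_measure.emeasure_eq_measure[OF prob_space.finite_measure[OF prob_space_uniform_Mset]]
          measure_uniform_count_measure[OF finite_Mset])
  qed simp
  finally show ?thesis
    by (simp add: prod_ennreal)
qed

lemma measurable_shift_Mu: "(\<lambda>\<omega> z. \<omega> (z + s)) \<in> Mu \<rightarrow>\<^sub>M Mu"
  unfolding Mu_def
  by (rule measurable_PiM_single'[OF measurable_component_singleton]) (auto simp: space_PiM)

lemma distr_Mu_shift: "distr Mu Mu (\<lambda>\<omega> z. \<omega> (z + s)) = Mu"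
  using distr_PiM_reindex[of UNIV "\<lambda>_. uniform_Mset" "\<lambda>z. z + s" UNIV]
  by (simp add: Mu_def prob_space_uniform_Mset inj_on_def restrict_UNIV)

lemma AE_Mu_theta_inv_pow:
  assumes "AE \<omega> in Mu. P \<omega>"
  shows "AE \<omega> in Mu. P ((theta_inv ^^ n) \<omega>)"
proof -
  have "AE \<omega> in Mu. P (\<lambda>z. \<omega> (z + - int n))"
    by (rule AE_distrD[OF measurable_shift_Mu]) (unfold distr_Mu_shift, rule assms)
  then show ?thesis
    by (simp add: theta_inv_pow)
qed

lemma null_sets_Mu_forever_in:
  fixes B :: "(real^'k::finite^'k) set" and ix :: "nat \<Rightarrow> int"
  assumes "B \<subseteq> Mset" "B \<noteq> Mset" "inj ix"
  shows "{\<omega>\<in>space Mu. \<forall>m. \<omega> (ix m) \<in> B} \<in> null_sets Mu"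
proof -
  define q :: real where "q = card B / card (Mset :: (real^'k^'k) set)"
  define C where "C n = {\<omega>\<in>space Mu. \<forall>z\<in>ix ` {..<n}. \<omega> z \<in> B}" for n
  have C_sets: "C n \<in> sets Mu" for n
    unfolding C_def using assms(1) by (intro cylinder_in_sets_Mu) auto
  have "emeasure Mu (C n) = ennreal (\<Prod>z\<in>ix ` {..<n}. q)" for n
    unfolding C_def q_def using assms(1) by (intro emeasure_Mu_cylinder) auto
  also have "(\<Prod>z\<in>ix ` {..<n}. q) = q ^ n" for n
    using assms(3) by (simp add: card_image inj_on_subset)
  finally have C_measure: "emeasure Mu (C n) = ennreal (q ^ n)" for n .
  have "card B < card (Mset :: (real^'k^'k) set)"
    using assms(1,2) finite_Mset by (intro psubset_card_mono) auto
  then have "q < 1"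
    by (simp add: q_def)
  then have "(\<lambda>n. ennreal (q ^ n)) \<longlonglongrightarrow> ennreal 0"
    by (intro tendsto_ennrealI LIMSEQ_realpow_zero) (simp_all add: q_def)
  moreover have "emeasure Mu (\<Inter>n. C n) \<le> ennreal (q ^ n)" for n
    using C_measure emeasure_mono[of "\<Inter>n. C n" "C n"] C_sets by (metis INT_lower UNIV_I)
  ultimately have "emeasure Mu (\<Inter>n. C n) \<le> 0"
    by (intro tendsto_lowerbound) auto
  moreover have "{\<omega>\<in>space Mu. \<forall>m. \<omega> (ix m) \<in> B} = (\<Inter>n. C n)"
    by (auto simp: C_def space_Mu)
  ultimately show ?thesis
    using C_sets by auto
qed

definition const_ahead :: "(int \<Rightarrow> real^'k::finite^'k) \<Rightarrow> bool" where
  "const_ahead \<omega> \<longleftrightarrow> (\<exists>m::nat. \<omega> (int m) \<in> const_matrices)"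

definition const_behind :: "(int \<Rightarrow> real^'k::finite^'k) \<Rightarrow> bool" where
  "const_behind \<omega> \<longleftrightarrow> (\<exists>m. 0 < m \<and> \<omega> (- int m) \<in> const_matrices)"

lemma AE_Mu_const_ahead_behind:
  "AE \<omega> in Mu. range \<omega> \<subseteq> Mset \<and> const_ahead \<omega> \<and> const_behind \<omega>"
proof (rule AE_I')
  let ?B = "Mset - const_matrices :: (real^'k^'k) set"
  have "?B \<noteq> Mset"
    using matrix_of_map_const_in_const_matrices const_matrices_subset_Mset by blast
  then have null: "{\<omega>\<in>space Mu. \<forall>m. \<omega> (ix m) \<in> ?B} \<in> null_sets Mu" if "inj ix" for ix :: "nat \<Rightarrow> int"
    using that by (intro null_sets_Mu_forever_in) auto
  have "{\<omega>\<in>space Mu. \<forall>m. \<omega> (int m) \<in> ?B} \<in> null_sets Mu"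
    and "{\<omega>\<in>space Mu. \<forall>m. \<omega> (- int (Suc m)) \<in> ?B} \<in> null_sets Mu"
    by (rule null; simp add: inj_def)+
  then show "{\<omega>\<in>space Mu. \<forall>m. \<omega> (int m) \<in> ?B} \<union> {\<omega>\<in>space Mu. \<forall>m. \<omega> (- int (Suc m)) \<in> ?B} \<in> null_sets Mu"
    by auto
  show "{\<omega>\<in>space Mu. \<not> (range \<omega> \<subseteq> Mset \<and> const_ahead \<omega> \<and> const_behind \<omega>)}
    \<subseteq> {\<omega>\<in>space Mu. \<forall>m. \<omega> (int m) \<in> ?B} \<union> {\<omega>\<in>space Mu. \<forall>m. \<omega> (- int (Suc m)) \<in> ?B}"
  proof (intro subsetI, elim CollectE conjE)
    fix \<omega> :: "int \<Rightarrow> real^'k^'k"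
    assume "\<omega> \<in> space Mu" "\<not> (range \<omega> \<subseteq> Mset \<and> const_ahead \<omega> \<and> const_behind \<omega>)"
    then have "range \<omega> \<subseteq> Mset" "\<not> const_ahead \<omega> \<or> \<not> const_behind \<omega>"
      by (auto simp: space_Mu)
    then show "\<omega> \<in> {\<omega>\<in>space Mu. \<forall>m. \<omega> (int m) \<in> ?B} \<union> {\<omega>\<in>space Mu. \<forall>m. \<omega> (- int (Suc m)) \<in> ?B}"
      unfolding const_ahead_def const_behind_def by (auto simp: space_Mu image_subset_iff)
  qed
qed

lemma flow_constant_if_const_ahead:
  assumes "const_ahead \<omega>"
  obtains m where "\<forall>i j. flow \<omega> 0 m i = flow \<omega> 0 m j"
proof -
  obtain m :: nat where "\<omega> (0 + int m) \<in> const_matrices"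
    using assms by (auto simp: const_ahead_def)
  with flow_constant_after_const_matrix that show ?thesis
    by blast
qed

definition first_const_behind :: "(int \<Rightarrow> real^'k::finite^'k) \<Rightarrow> nat" where
  "first_const_behind \<omega> = (LEAST m. 0 < m \<and> \<omega> (- int m) \<in> const_matrices)"

lemma flow_constant_at_first_const_behind:
  assumes "const_behind \<omega>"
  shows "\<forall>i j. flow \<omega> (- int (first_const_behind \<omega>)) (first_const_behind \<omega>) i
    = flow \<omega> (- int (first_const_behind \<omega>)) (first_const_behind \<omega>) j"
proof -
  let ?L = "first_const_behind \<omega>"
  have "0 < ?L" "\<omega> (- int ?L) \<in> const_matrices"
    using LeastI_ex[OF assms[unfolded const_behind_def]] by (simp_all add: first_const_behind_def)
  then show ?thesis
    using flow_constant_after_const_matrix[of \<omega> "- int ?L" 0 ?L] by simp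
qed

text \<open>The paper's limit \<open>lim\<^sub>n A\<^sub>-\<^sub>1 \<cdots> A\<^sub>-\<^sub>n e\<^sub>1\<close>, read off at the first \<open>n\<close> where the
  product has become constant.\<close>

definition pullback_index :: "(int \<Rightarrow> real^'k::{finite,wellorder}^'k::{finite,wellorder}) \<Rightarrow> 'k" where
  "pullback_index \<omega> = flow \<omega> (- int (first_const_behind \<omega>)) (first_const_behind \<omega>) e1_idx"

lemma pullback_flow_eq_pullback_index:
  assumes "const_behind \<omega>" "first_const_behind \<omega> \<le> n"
  shows "flow \<omega> (- int n) n = (\<lambda>_. pullback_index \<omega>)"
  unfolding pullback_index_def
  using flow_constant_at_first_const_behind[OF assms(1)] assms(2) by (rule pullback_flow_constant_mono)

lemma pullback_index_unique:
  assumes "const_behind \<omega>" "flow \<omega> (- int n) n = (\<lambda>_. i)"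
  shows "i = pullback_index \<omega>"
proof -
  let ?m = "max n (first_const_behind \<omega>)"
  have "flow \<omega> (- int ?m) ?m = (\<lambda>_. i)"
    using pullback_flow_constant_mono[of \<omega> n ?m] assms(2) by auto
  moreover have "flow \<omega> (- int ?m) ?m = (\<lambda>_. pullback_index \<omega>)"
    by (rule pullback_flow_eq_pullback_index[OF assms(1)]) simp
  ultimately show ?thesis
    by metis
qed

lemma pullback_flow_constant_iff:
  assumes "const_behind \<omega>"
  shows "(\<forall>j. \<forall>n\<ge>m. flow \<omega> (- int n) n j = pullback_index \<omega>)
    \<longleftrightarrow> (\<forall>i j. flow \<omega> (- int m) m i = flow \<omega> (- int m) m j)"
proof
  assume "\<forall>j. \<forall>n\<ge>m. flow \<omega> (- int n) n j = pullback_index \<omega>"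
  then show "\<forall>i j. flow \<omega> (- int m) m i = flow \<omega> (- int m) m j"
    by simp
next
  assume "\<forall>i j. flow \<omega> (- int m) m i = flow \<omega> (- int m) m j"
  then have later: "flow \<omega> (- int n) n = (\<lambda>_. flow \<omega> (- int m) m undefined)" if "m \<le> n" for n
    using pullback_flow_constant_mono that by blast
  then have "flow \<omega> (- int m) m undefined = pullback_index \<omega>"
    using pullback_index_unique[OF assms] by blast
  with later show "\<forall>j. \<forall>n\<ge>m. flow \<omega> (- int n) n j = pullback_index \<omega>"
    by simp
qed

lemma flow_pullback_index:
  assumes "const_behind \<omega>"
  shows "flow \<omega> 0 n (pullback_index \<omega>) = pullback_index (\<lambda>z. \<omega> (z + int n))"
proof -
  let ?L = "first_const_behind \<omega>" and ?\<omega>' = "\<lambda>z. \<omega> (z + int n)"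
  obtain m where "0 < m" "\<omega> (- int m) \<in> const_matrices"
    using assms by (auto simp: const_behind_def)
  then have shifted: "const_behind ?\<omega>'"
    unfolding const_behind_def by (intro exI[of _ "m + n"]) simp
  have "flow ?\<omega>' (- int (?L + n)) (?L + n) = flow \<omega> (- int ?L) (?L + n)"
    by (simp add: flow_shift)
  also have "\<dots> = (\<lambda>_. flow \<omega> 0 n (pullback_index \<omega>))"
    using pullback_flow_eq_pullback_index[OF assms, of ?L] by (simp add: flow_add o_def)
  finally show ?thesis
    by (rule pullback_index_unique[OF shifted])
qed

lemma measurable_coordinate:
  "(\<lambda>\<omega>. f (\<omega> z)) \<in> Mu \<rightarrow>\<^sub>M count_space UNIV"
proof -
  have f: "f \<in> uniform_Mset \<rightarrow>\<^sub>M count_space UNIV"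
    by (simp add: measurable_def sets_uniform_count_measure space_uniform_count_measure)
  show ?thesis
    unfolding Mu_def by (rule measurable_compose[where f = "\<lambda>\<omega>. \<omega> z", OF measurable_component_singleton f]) simp
qed

lemma measurable_flow: "(\<lambda>\<omega>. flow \<omega> a n x) \<in> Mu \<rightarrow>\<^sub>M count_space UNIV"
proof (induction n arbitrary: x)
  case (Suc n)
  have "(\<lambda>\<omega>. column_map (\<omega> (a + int n)) (flow \<omega> a n x)) \<in> Mu \<rightarrow>\<^sub>M count_space UNIV"
    by (rule measurable_compose_countable'[where I=UNIV, OF measurable_coordinate Suc.IH])
      (simp add: countable_finite)
  then show ?case
    by simp
qed simp

lemma measurable_first_const_behind: "first_const_behind \<in> Mu \<rightarrow>\<^sub>M count_space UNIV"
  unfolding first_const_behind_def[abs_def] by (rule measurable_Least, rule measurable_coordinate)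

lemma measurable_pullback_index: "pullback_index \<in> Mu \<rightarrow>\<^sub>M count_space UNIV"
proof -
  have "(\<lambda>\<omega>. flow \<omega> (- int (first_const_behind \<omega>)) (first_const_behind \<omega>) e1_idx) \<in> Mu \<rightarrow>\<^sub>M count_space UNIV"
    by (rule measurable_compose_countable'[where I=UNIV, OF measurable_flow measurable_first_const_behind]) simp
  then show ?thesis
    by (simp add: pullback_index_def[abs_def])
qed

lemma sync_index_pullback_index: "sync_index pullback_index"
  unfolding sync_index_def
proof
  show "AE \<omega> in Mu. \<forall>n. P0 n \<omega> *v axis (pullback_index \<omega>) 1
      = axis (pullback_index ((theta ^^ n) \<omega>)) 1"
    using AE_Mu_const_ahead_behind
    by eventually_elim (simp add: P0_mult_axis theta_pow flow_pullback_index)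
qed (rule measurable_pullback_index)

lemma sync_index_AE_eq_pullback_index:
  assumes "sync_index J"
  shows "AE \<omega> in Mu. J \<omega> = pullback_index \<omega>"
proof -
  have "AE \<omega> in Mu. \<forall>n. P0 n \<omega> *v axis (J \<omega>) 1 = axis (J ((theta ^^ n) \<omega>)) 1"
    using assms by (simp add: sync_index_def)
  then have "AE \<omega> in Mu. \<forall>m n. P0 n ((theta_inv ^^ m) \<omega>) *v axis (J ((theta_inv ^^ m) \<omega>)) 1
      = axis (J ((theta ^^ n) ((theta_inv ^^ m) \<omega>))) 1"
    by (auto simp: AE_all_countable intro: AE_Mu_theta_inv_pow)
  with AE_Mu_const_ahead_behind show ?thesis
  proof eventually_elim
    case (elim \<omega>)
    let ?L = "first_const_behind \<omega>"
    from elim(2) have "P0 ?L ((theta_inv ^^ ?L) \<omega>) *v axis (J ((theta_inv ^^ ?L) \<omega>)) 1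
       = axis (J ((theta ^^ ?L) ((theta_inv ^^ ?L) \<omega>))) 1"
      by blast
    moreover have "(theta ^^ ?L) ((theta_inv ^^ ?L) \<omega>) = \<omega>"
      by (simp add: theta_pow theta_inv_pow)
    ultimately show ?case
      using elim(1) by (simp add: P0_pullback_mult_axis pullback_flow_eq_pullback_index axis_eq_axis)
  qed
qed

lemma Least_le_iff_upward_closed:
  fixes Q :: "nat \<Rightarrow> bool"
  assumes "Q m" "\<And>n n'. Q n \<Longrightarrow> n \<le> n' \<Longrightarrow> Q n'"
  shows "(LEAST n. Q n) \<le> n \<longleftrightarrow> Q n"
  using assms LeastI[of Q m] Least_le[of Q n] by blast

text \<open>The left-hand side is the shape of both \<^const>\<open>N0_plus\<close> and \<^const>\<open>N0_minus\<close>.\<close>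

lemma first_rank_one_le_iff:
  fixes P :: "nat \<Rightarrow> real^'n::finite^'m::finite" and F :: "nat \<Rightarrow> 'n \<Rightarrow> 'm"
  assumes columns: "\<And>n j. P n *v axis j 1 = axis (F n j) 1"
    and mono: "\<And>n n'. \<forall>i j. F n i = F n j \<Longrightarrow> n \<le> n' \<Longrightarrow> \<forall>i j. F n' i = F n' j"
    and eventually: "\<forall>i j. F m i = F m j"
  shows "(if (\<lambda>n. rank (P n)) \<longlonglongrightarrow> 1 then (LEAST n. 1 \<le> n \<and> rank (P n) = 1) else 1) \<le> n
    \<longleftrightarrow> 1 \<le> n \<and> (\<forall>i j. F n i = F n j)"
proof -
  have rank: "rank (P n) = 1 \<longleftrightarrow> (\<forall>i j. F n i = F n j)" for n
    using rank_eq_1_iff_basis_columns[OF columns] .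
  have "\<forall>\<^sub>F n in sequentially. rank (P n) = 1"
    using eventually mono rank by (auto intro: eventually_sequentiallyI[of m])
  then have "(\<lambda>n. rank (P n)) \<longlonglongrightarrow> 1"
    by (rule tendsto_eventually)
  moreover have "(LEAST n. 1 \<le> n \<and> rank (P n) = 1) \<le> n \<longleftrightarrow> 1 \<le> n \<and> rank (P n) = 1"
    by (rule Least_le_iff_upward_closed[of _ "Suc m"]) (use eventually mono rank in \<open>auto\<close>)
  ultimately show ?thesis
    by (simp add: rank del: One_nat_def)
qed

lemma N0_plus_le_iff:
  assumes "range \<omega> \<subseteq> Mset" "const_ahead \<omega>"
  shows "N0_plus \<omega> \<le> n \<longleftrightarrow> 1 \<le> n \<and> (\<forall>i j. flow \<omega> 0 n i = flow \<omega> 0 n j)"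
proof -
  obtain m where m: "\<forall>i j. flow \<omega> 0 m i = flow \<omega> 0 m j"
    using flow_constant_if_const_ahead[OF assms(2)] .
  show ?thesis
    unfolding N0_plus_def
  proof (rule first_rank_one_le_iff[where P = "\<lambda>n. P0 n \<omega>" and F = "\<lambda>n. flow \<omega> 0 n",
        OF P0_mult_axis[OF assms(1)] _ m])
    show "\<forall>i j. flow \<omega> 0 n' i = flow \<omega> 0 n' j"
      if "\<forall>i j. flow \<omega> 0 n i = flow \<omega> 0 n j" "n \<le> n'" for n n'
      using flow_constant_mono[OF that] by blast
  qed
qed

lemma N0_minus_le_iff:
  assumes "range \<omega> \<subseteq> Mset" "const_behind \<omega>"
  shows "N0_minus \<omega> \<le> n \<longleftrightarrow> 1 \<le> n \<and> (\<forall>i j. flow \<omega> (- int n) n i = flow \<omega> (- int n) n j)"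
  unfolding N0_minus_def
proof (rule first_rank_one_le_iff[where F = "\<lambda>n. flow \<omega> (- int n) n",
      OF P0_pullback_mult_axis[OF assms(1)] _ flow_constant_at_first_const_behind[OF assms(2)]])
  show "\<forall>i j. flow \<omega> (- int n') n' i = flow \<omega> (- int n') n' j"
    if "\<forall>i j. flow \<omega> (- int n) n i = flow \<omega> (- int n) n j" "n \<le> n'" for n n'
    using pullback_flow_constant_mono[OF that, of undefined] by simp
qed

lemma synchronized_P0: "synchronized TYPE('k::finite)"
  unfolding synchronized_def
proof (intro exI conjI)
  define N :: "(int \<Rightarrow> real^'k^'k) \<Rightarrow> nat" where
    "N \<omega> = Suc (LEAST m. \<omega> (int m) \<in> const_matrices)" for \<omega>
  show "N \<in> Mu \<rightarrow>\<^sub>M count_space UNIV"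
    unfolding N_def by (intro measurable_compose[OF measurable_Least] measurable_coordinate) simp
  show "\<forall>\<omega>\<in>space Mu. 1 \<le> N \<omega>"
    by (simp add: N_def)
  show "AE \<omega> in Mu. \<forall>n\<ge>N \<omega>. cols_coincide (P0 n \<omega>)"
    using AE_Mu_const_ahead_behind
  proof eventually_elim
    case (elim \<omega>)
    then have "\<omega> (int (LEAST m. \<omega> (int m) \<in> const_matrices)) \<in> const_matrices"
      by (auto simp: const_ahead_def intro: LeastI_ex)
    with elim show ?case
      using flow_constant_after_const_matrix[of \<omega> 0]
      by (auto simp: N_def cols_coincide_iff_basis_columns[OF P0_mult_axis])
  qed
qed

lemma P0_pullback_tendsto:
  fixes J :: "(int \<Rightarrow> real^'k::{finite,wellorder}^'k::{finite,wellorder}) \<Rightarrow> 'k"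
  assumes "sync_index J"
  shows "AE \<omega> in Mu. (\<lambda>n. P0 n ((theta_inv ^^ n) \<omega>) *v axis e1_idx 1) \<longlonglongrightarrow> axis (J \<omega>) 1"
  using sync_index_AE_eq_pullback_index[OF assms] AE_Mu_const_ahead_behind
proof eventually_elim
  case (elim \<omega>)
  have "\<forall>\<^sub>F n in sequentially. P0 n ((theta_inv ^^ n) \<omega>) *v axis e1_idx 1 = axis (J \<omega>) 1"
    using elim by (auto intro!: eventually_sequentiallyI[of "first_const_behind \<omega>"]
        simp: P0_pullback_mult_axis pullback_flow_eq_pullback_index)
  then show ?case
    by (rule tendsto_eventually)
qed

lemma fwd_sync_time_iff:
  assumes "sync_index J" "N \<in> Mu \<rightarrow>\<^sub>M count_space UNIV" "\<forall>\<omega>\<in>space Mu. 1 \<le> N \<omega>"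
  shows "fwd_sync_time J N \<longleftrightarrow> (AE \<omega> in Mu. N0_plus \<omega> \<le> N \<omega>)"
proof -
  have "AE \<omega> in Mu. \<forall>n. P0 n \<omega> *v axis (J \<omega>) 1 = axis (J ((theta ^^ n) \<omega>)) 1"
    using assms(1) by (simp add: sync_index_def)
  then have "AE \<omega> in Mu. (\<forall>j. \<forall>n\<ge>N \<omega>. P0 n \<omega> *v axis j 1 = axis (J ((theta ^^ n) \<omega>)) 1)
      \<longleftrightarrow> N0_plus \<omega> \<le> N \<omega>"
    using AE_Mu_const_ahead_behind
  proof eventually_elim
    case (elim \<omega>)
    then have N: "1 \<le> N \<omega>"
      using assms(3) by (simp add: space_Mu)
    have J: "J ((theta ^^ n) \<omega>) = flow \<omega> 0 n (J \<omega>)" for n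
      using elim by (simp add: P0_mult_axis axis_eq_axis)
    show ?case
      using elim N
      by (simp add: P0_mult_axis N0_plus_le_iff J axis_eq_axis flow_constant_iff)
  qed
  with assms(2,3) show ?thesis
    unfolding fwd_sync_time_def by (simp add: eventually_subst)
qed

lemma pb_sync_time_iff:
  fixes J :: "(int \<Rightarrow> real^'k::{finite,wellorder}^'k::{finite,wellorder}) \<Rightarrow> 'k"
  assumes "sync_index J" "N \<in> Mu \<rightarrow>\<^sub>M count_space UNIV" "\<forall>\<omega>\<in>space Mu. 1 \<le> N \<omega>"
  shows "pb_sync_time J N \<longleftrightarrow> (AE \<omega> in Mu. N0_minus \<omega> \<le> N \<omega>)"
proof -
  have "AE \<omega> in Mu. (\<forall>j. \<forall>n\<ge>N \<omega>. P0 n ((theta_inv ^^ n) \<omega>) *v axis j 1 = axis (J \<omega>) 1)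
      \<longleftrightarrow> N0_minus \<omega> \<le> N \<omega>"
    using sync_index_AE_eq_pullback_index[OF assms(1)] AE_Mu_const_ahead_behind
  proof eventually_elim
    case (elim \<omega>)
    then have N: "1 \<le> N \<omega>"
      using assms(3) by (simp add: space_Mu)
    with elim show ?case
      by (simp add: P0_pullback_mult_axis N0_minus_le_iff axis_eq_axis pullback_flow_constant_iff)
  qed
  with assms(2,3) show ?thesis
    unfolding pb_sync_time_def by (simp add: eventually_subst)
qed

lemma flow_eq_id: "(\<And>m. m < n \<Longrightarrow> \<omega> (a + int m) = mat 1) \<Longrightarrow> flow \<omega> a n = id"
  by (induction n) (auto simp flip: matrix_of_map_id)

lemma not_unif_synchronized:
  assumes "CARD('k::finite) \<ge> 2"
  shows "\<not> unif_synchronized TYPE('k)"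
proof
  assume "unif_synchronized TYPE('k)"
  then obtain N :: "(int \<Rightarrow> real^'k^'k) \<Rightarrow> nat" and c
    where "AE \<omega> in Mu. N \<omega> = c" "AE \<omega> in Mu. \<forall>n\<ge>N \<omega>. cols_coincide (P0 n \<omega>)"
    unfolding unif_synchronized_def by blast
  then have "AE \<omega> in (Mu :: (int \<Rightarrow> real^'k^'k) measure). cols_coincide (P0 c \<omega>)"
    by eventually_elim auto
  then obtain Z :: "(int \<Rightarrow> real^'k^'k) set"
    where Z: "{\<omega>\<in>space Mu. \<not> cols_coincide (P0 c \<omega>)} \<subseteq> Z" "emeasure Mu Z = 0" "Z \<in> sets Mu"
    by (rule AE_E)
  have "\<not> CARD('k) \<le> Suc 0"
    using assms by simp
  then obtain a b :: 'k where "a \<noteq> b"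
    by (auto simp: card_le_Suc0_iff_eq)
  let ?C = "{\<omega>\<in>space Mu. \<forall>z\<in>{0..<int c}. \<omega> z \<in> {mat 1 :: real^'k^'k}}"
  have id_in_Mset: "(mat 1 :: real^'k^'k) \<in> Mset"
    by (metis matrix_of_map_id matrix_of_map_in_Mset)
  have "?C \<subseteq> Z"
  proof
    fix \<omega> assume \<omega>: "\<omega> \<in> ?C"
    then have \<omega>_Mset: "range \<omega> \<subseteq> Mset" and "flow \<omega> 0 c = id"
      by (auto simp: space_Mu intro!: flow_eq_id)
    then have "cols_coincide (P0 c \<omega>) \<longleftrightarrow> (\<forall>i j :: 'k. i = j)"
      using cols_coincide_iff_basis_columns[OF P0_mult_axis[OF \<omega>_Mset]] by simp
    with \<open>a \<noteq> b\<close> have "\<not> cols_coincide (P0 c \<omega>)"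
      by blast
    with \<omega> Z(1) show "\<omega> \<in> Z"
      by auto
  qed
  then have "emeasure Mu ?C = 0"
    by (rule emeasure_eq_0[OF Z(3,2)])
  moreover have "emeasure Mu ?C > 0"
  proof -
    have "(\<Prod>z\<in>{0..<int c}. 1 / card (Mset :: (real^'k^'k) set)) > 0"
      using finite_Mset matrix_of_map_in_Mset by (intro prod_pos) (auto simp: card_gt_0_iff)
    then show ?thesis
      using id_in_Mset by (subst emeasure_Mu_cylinder) auto
  qed
  ultimately show False
    by simp
qed

theorem proposition6p1:
  assumes "CARD('k::{finite,wellorder}) \<ge> 2"
  shows "synchronized TYPE('k::{finite,wellorder})
    \<and> (\<exists>J :: (int \<Rightarrow> real^'k::{finite,wellorder}^'k::{finite,wellorder}) \<Rightarrow> 'k::{finite,wellorder}. sync_index J)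
    \<and> (\<forall>J :: (int \<Rightarrow> real^'k::{finite,wellorder}^'k::{finite,wellorder}) \<Rightarrow> 'k::{finite,wellorder}. sync_index J \<longrightarrow>
         (AE \<omega> in Mu. (\<lambda>n. P0 n ((theta_inv ^^ n) \<omega>) *v axis e1_idx 1) \<longlonglongrightarrow> axis (J \<omega>) 1)
       \<and> (\<forall>N :: (int \<Rightarrow> real^'k::{finite,wellorder}^'k::{finite,wellorder}) \<Rightarrow> nat.
            N \<in> Mu \<rightarrow>\<^sub>M count_space UNIV \<longrightarrow> (\<forall>\<omega>\<in>space Mu. 1 \<le> N \<omega>) \<longrightarrow>
            (fwd_sync_time J N \<longleftrightarrow> (AE \<omega> in Mu. N0_plus \<omega> \<le> N \<omega>))
          \<and> (pb_sync_time J N \<longleftrightarrow> (AE \<omega> in Mu. N0_minus \<omega> \<le> N \<omega>))))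
    \<and> \<not> unif_synchronized TYPE('k::{finite,wellorder})"
proof (intro conjI allI impI)
  show "synchronized TYPE('k)"
    by (rule synchronized_P0)
  show "\<exists>J :: _ \<Rightarrow> 'k. sync_index J"
    using sync_index_pullback_index by blast
  show "\<not> unif_synchronized TYPE('k)"
    by (rule not_unif_synchronized[OF assms])
  fix J :: "(int \<Rightarrow> real^'k::{finite,wellorder}^'k::{finite,wellorder}) \<Rightarrow> 'k"
    and N :: "(int \<Rightarrow> real^'k::{finite,wellorder}^'k::{finite,wellorder}) \<Rightarrow> nat"
  assume J: "sync_index J"
  then show "AE \<omega> in Mu. (\<lambda>n. P0 n ((theta_inv ^^ n) \<omega>) *v axis e1_idx 1) \<longlonglongrightarrow> axis (J \<omega>) 1"
    by (rule P0_pullback_tendsto)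
  assume "N \<in> Mu \<rightarrow>\<^sub>M count_space UNIV" "\<forall>\<omega>\<in>space Mu. 1 \<le> N \<omega>"
  with J show "fwd_sync_time J N \<longleftrightarrow> (AE \<omega> in Mu. N0_plus \<omega> \<le> N \<omega>)"
    and "pb_sync_time J N \<longleftrightarrow> (AE \<omega> in Mu. N0_minus \<omega> \<le> N \<omega>)"
    by (rule fwd_sync_time_iff, rule pb_sync_time_iff)
qed

end
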